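(* Let $\mathbb{T}$ be a time scale and $\alpha\in(0,1]$. Let $f:\mathbb{R}\to\mathbb{R}$ be continuously differentiable and let $g:\mathbb{T}\to\mathbb{R}$ be continuous on $\mathbb{T}^k$. If $g$ is nabla fractional differentiable of order $\alpha$ at $t\in\mathbb{T}^k$, then $f\circ g:\mathbb{T}\to\mathbb{R}$ is nabla fractional differentiable of order $\alpha$ at $t$ and $$\nabla^{(\alpha)}(f\circ g)(t)=\int_0^1 f'\big(g(\rho(t))+\varphi\,(\nu(t))^{\alpha}\,\nabla^{(\alpha)}g(t)\big)\,d\varphi\cdot\nabla^{(\alpha)}g(t).$$
   Context: A time scale $\mathbb{T}$ is a nonempty closed subset of $\mathbb{R}$ with the relative topology. For $t\in\mathbb{T}$: $\rho(t)=\sup\{s\in\mathbb{T}:s<t\}$, $\sigma(t)=\inf\{s\in\mathbb{T}:s>t\}$, $\nu(t)=t-\rho(t)$. If $\mathbb{T}$ has a minimum $m$ with $\sigma(m)>m$ then $\mathbb{T}^k=\mathbb{T}\setminus\{m\}$, else $\mathbb{T}^k=\mathbb{T}$. $U_\delta(t)=(t-\delta,t+\delta)\cap\mathbb{T}$, $U^-_\delta(t)=(t-\delta,t)\cap\mathbb{T}$. Let $Q=\{1/q: q \text{ an odd positive integer}\}$; for $\alpha\in Q$, $x^\alpha$ is the real $q$-th root. Definition: $h:\mathbb{T}\to\mathbb{R}$ is nabla fractional differentiable of order $\alpha$ at $t\in\mathbb{T}^k$ if there is $L\in\mathbb{R}$ such that for every $\varepsilon>0$ there is $\delta>0$ with $|[h(\rho(t))-h(s)]-L[\rho(t)-s]^\alpha|\le\varepsilon|\rho(t)-s|^\alpha$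 for all $s\in U_\delta(t)$ if $\alpha\in Q$, resp. all $s\in U^-_\delta(t)$ if $\alpha\notin Q$; then $\nabla^{(\alpha)}h(t):=L$. *)

theory Defs
  imports "HOL-Analysis.Analysis"
begin

definition time_scale :: "real set \<Rightarrow> bool" where
  "time_scale T \<longleftrightarrow> T \<noteq> {} \<and> closed T"

text \<open>Backward jump; with the standard convention sup of the empty set = inf T = t.\<close>
definition ts_rho :: "real set \<Rightarrow> real \<Rightarrow> real" where
  "ts_rho T t = (if {s\<in>T. s < t} = {} then t else Sup {s\<in>T. s < t})"

text \<open>Forward jump; with the standard convention inf of the empty set = sup T = t.\<close>
definition ts_sigma :: "real set \<Rightarrow> real \<Rightarrow> real" where
  "ts_sigma T t = (if {s\<in>T. s > t} = {} then t else Inf {s\<in>T. s > t})"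

definition ts_nu :: "real set \<Rightarrow> real \<Rightarrow> real" where
  "ts_nu T t = t - ts_rho T t"

definition ts_Tk :: "real set \<Rightarrow> real set" where
  "ts_Tk T = (if \<exists>m\<in>T. (\<forall>s\<in>T. m \<le> s) \<and> ts_sigma T m > m
              then T - {THE m. m \<in> T \<and> (\<forall>s\<in>T. m \<le> s)} else T)"

definition U_nbhd :: "real set \<Rightarrow> real \<Rightarrow> real \<Rightarrow> real set" where
  "U_nbhd T \<delta> t = {t - \<delta> <..< t + \<delta>} \<inter> T"

definition U_left :: "real set \<Rightarrow> real \<Rightarrow> real \<Rightarrow> real set" where
  "U_left T \<delta> t = {t - \<delta> <..< t} \<inter> T"

definition Qodd :: "real set" where
  "Qodd = {1 / real q | q. odd q \<and> q > 0}"

definition frpow :: "real \<Rightarrow> real \<Rightarrow> real" where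
  "frpow \<alpha> x = (if \<alpha> \<in> Qodd
      then root (SOME q. odd q \<and> q > 0 \<and> \<alpha> = 1 / real q) x
      else x powr \<alpha>)"

definition nabla_frac_has_deriv ::
  "real set \<Rightarrow> real \<Rightarrow> (real \<Rightarrow> real) \<Rightarrow> real \<Rightarrow> real \<Rightarrow> bool" where
  "nabla_frac_has_deriv T \<alpha> h t L \<longleftrightarrow> t \<in> ts_Tk T \<and>
     (\<forall>\<epsilon>>0. \<exists>\<delta>>0. \<forall>s \<in> (if \<alpha> \<in> Qodd then U_nbhd T \<delta> t else U_left T \<delta> t).
        \<bar>(h (ts_rho T t) - h s) - L * frpow \<alpha> (ts_rho T t - s)\<bar>
          \<le> \<epsilon> * \<bar>ts_rho T t - s\<bar> powr \<alpha>)"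

definition nabla_frac_differentiable ::
  "real set \<Rightarrow> real \<Rightarrow> (real \<Rightarrow> real) \<Rightarrow> real \<Rightarrow> bool" where
  "nabla_frac_differentiable T \<alpha> h t \<longleftrightarrow> (\<exists>L. nabla_frac_has_deriv T \<alpha> h t L)"

end

theory Submission
  imports Defs
begin

text \<open>
  Write \<open>r = \<rho>(t)\<close> and let \<open>N\<close> be the difference quotient of \<open>f\<close> at \<open>g(r)\<close>, extended by \<open>f'(g(r))\<close>
  on the diagonal, so that \<open>f(g(r)) - f(b) = N(b) (g(r) - b)\<close> for all \<open>b\<close> and \<open>N\<close> is continuous.
  Then \<open>f(g(r)) - f(g(s)) = N(g(s)) (g(r) - g(s))\<close>, and continuity of \<open>N \<circ> g\<close> at \<open>t\<close> turns the
  fractional derivative \<open>L\<close> of \<open>g\<close> into the derivative \<open>N(g(t)) L\<close> of \<open>f \<circ> g\<close>.  It remains to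
  identify \<open>N(g(t))\<close> with the integral, which is the difference quotient of \<open>f\<close> between
  \<open>g(r)\<close> and \<open>g(r) + \<nu>(t)\<^sup>\<alpha> L\<close>.  For \<open>\<alpha> \<in> Q\<close> the point \<open>s = t\<close> is admissible in the
  definition and forces \<open>g(t) = g(r) + \<nu>(t)\<^sup>\<alpha> L\<close>; for \<open>\<alpha> \<notin> Q\<close> either \<open>\<nu>(t) = 0\<close>, or \<open>t\<close> is
  left-scattered, the defining neighbourhood is empty and every number is a derivative.
\<close>

lemma frpow_Qodd_root:
  assumes "\<alpha> \<in> Qodd"
  obtains q where "odd q" "q > 0" "\<alpha> = 1 / real q" "\<And>x. frpow \<alpha> x = root q x"
proof -
  have ex: "\<exists>q. odd q \<and> q > 0 \<and> \<alpha> = 1 / real q"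
    using assms by (auto simp: Qodd_def)
  define q where "q = (SOME q. odd q \<and> q > 0 \<and> \<alpha> = 1 / real q)"
  have "odd q \<and> q > 0 \<and> \<alpha> = 1 / real q"
    unfolding q_def by (rule someI_ex[OF ex])
  then show thesis
    using assms by (intro that) (auto simp: frpow_def q_def)
qed

lemma frpow_0 [simp]: "frpow \<alpha> 0 = 0"
  by (simp add: frpow_def)

lemma frpow_minus: "\<alpha> \<in> Qodd \<Longrightarrow> frpow \<alpha> (- x) = - frpow \<alpha> x"
  by (metis frpow_Qodd_root real_root_minus)

lemma abs_frpow:
  assumes "\<alpha> \<in> Qodd \<or> 0 \<le> x"
  shows "\<bar>frpow \<alpha> x\<bar> = \<bar>x\<bar> powr \<alpha>"
proof (cases "\<alpha> \<in> Qodd")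
  case True
  then obtain q where q: "odd q" "q > 0" "\<alpha> = 1 / real q" "\<And>x. frpow \<alpha> x = root q x"
    by (metis frpow_Qodd_root)
  then show ?thesis
    using real_root_abs root_powr_inverse[of q "\<bar>x\<bar>"] by simp
next
  case False
  then show ?thesis
    using assms by (simp add: frpow_def)
qed

lemma ts_Tk_subset: "ts_Tk T \<subseteq> T"
  by (auto simp: ts_Tk_def)

lemma ts_rho_le: "ts_rho T t \<le> t"
  by (auto simp: ts_rho_def intro!: cSup_least)

lemma le_ts_rho:
  assumes "s \<in> T" "s < t"
  shows "s \<le> ts_rho T t"
proof -
  have "bdd_above {s\<in>T. s < t}"
    by (rule bdd_aboveI[of _ t]) auto
  then show ?thesis
    using assms by (auto simp: ts_rho_def intro: cSup_upper)
qed

definition difference_quotient :: "(real \<Rightarrow> real) \<Rightarrow> (real \<Rightarrow> real) \<Rightarrow> real \<Rightarrow> real \<Rightarrow> real" where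
  "difference_quotient f f' a b = (if b = a then f' a else (f b - f a) / (b - a))"

lemma difference_quotient_eq: "f a - f b = difference_quotient f f' a b * (a - b)"
  by (cases "b = a") (auto simp: difference_quotient_def field_simps)

lemma isCont_difference_quotient:
  assumes "\<And>x. (f has_real_derivative f' x) (at x)"
  shows "isCont (difference_quotient f f' a) b"
proof (cases "b = a")
  case True
  have "((\<lambda>y. (f y - f a) / (y - a)) \<longlongrightarrow> f' a) (at a)"
    using assms[of a] by (simp add: has_field_derivative_iff)
  then have "(difference_quotient f f' a \<longlongrightarrow> f' a) (at a)"
    by (rule Lim_transform_eventually)
       (auto simp: difference_quotient_def eventually_at_filter)
  then show ?thesis
    using True by (simp add: isCont_def difference_quotient_def)
next
  case False
  have "\<forall>\<^sub>F y in nhds b. y \<noteq> a"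
    using False by (intro t1_space_nhds) auto
  then have "\<forall>\<^sub>F y in nhds b. difference_quotient f f' a y = (f y - f a) / (y - a)"
    by eventually_elim (auto simp: difference_quotient_def)
  moreover have "isCont (\<lambda>y. (f y - f a) / (y - a)) b"
    using False assms DERIV_isCont by (auto intro!: continuous_intros)
  ultimately show ?thesis
    by (simp add: isCont_cong)
qed

lemma integral_deriv_segment:
  assumes "\<And>x. (f has_real_derivative f' x) (at x)"
  shows "integral {0..1} (\<lambda>\<phi>. f' (a + \<phi> * c)) = difference_quotient f f' a (a + c)"
proof (cases "c = 0")
  case True
  then show ?thesis by (simp add: difference_quotient_def)
next
  case False
  have "((\<lambda>\<phi>. f (a + \<phi> * c) / c) has_real_derivative f' (a + \<phi> * c)) (at \<phi>)" for \<phi>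
  proof -
    have "((\<lambda>\<phi>. f (a + \<phi> * c)) has_real_derivative f' (a + \<phi> * c) * c) (at \<phi>)"
      by (rule DERIV_chain2[OF assms]) (auto intro!: derivative_eq_intros)
    from DERIV_cdivide[OF this, of c] show ?thesis
      using False by simp
  qed
  then have "((\<lambda>\<phi>. f' (a + \<phi> * c)) has_integral (f (a + c) / c - f a / c)) {0..1}"
    using fundamental_theorem_of_calculus[of 0 1 "\<lambda>\<phi>. f (a + \<phi> * c) / c"]
    by (simp add: has_real_derivative_iff_has_vector_derivative[symmetric]
        has_field_derivative_at_within)
  then show ?thesis
    using False by (simp add: integral_unique diff_divide_distrib difference_quotient_def)
qed

lemma nabla_frac_has_deriv_left_scattered:
  assumes "t \<in> ts_Tk T" "\<alpha> \<notin> Qodd" "ts_rho T t < t"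
  shows "nabla_frac_has_deriv T \<alpha> h t L"
proof -
  have "U_left T (t - ts_rho T t) t = {}"
    using le_ts_rho by (fastforce simp: U_left_def)
  then show ?thesis
    using assms by (auto simp: nabla_frac_has_deriv_def intro!: exI[of _ "t - ts_rho T t"])
qed

lemma nabla_frac_has_deriv_jump:
  assumes deriv: "nabla_frac_has_deriv T \<alpha> g t L" and admissible: "\<alpha> \<in> Qodd \<or> ts_rho T t = t"
  shows "g t = g (ts_rho T t) + frpow \<alpha> (ts_nu T t) * L"
proof (cases "ts_rho T t = t")
  case True
  then show ?thesis by (simp add: ts_nu_def)
next
  case False
  with admissible have Q: "\<alpha> \<in> Qodd" by blast
  define r where "r = ts_rho T t"
  have tT: "t \<in> T"
    using deriv ts_Tk_subset by (auto simp: nabla_frac_has_deriv_def)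
  define K where "K = \<bar>r - t\<bar> powr \<alpha>"
  have bound: "\<bar>(g r - g t) - L * frpow \<alpha> (r - t)\<bar> \<le> \<epsilon> * K" if "\<epsilon> > 0" for \<epsilon>
  proof -
    obtain \<delta> where "\<delta> > 0" and "\<forall>s \<in> U_nbhd T \<delta> t.
        \<bar>(g r - g s) - L * frpow \<alpha> (r - s)\<bar> \<le> \<epsilon> * \<bar>r - s\<bar> powr \<alpha>"
      using deriv Q \<open>\<epsilon> > 0\<close> unfolding nabla_frac_has_deriv_def r_def by fastforce
    moreover have "t \<in> U_nbhd T \<delta> t"
      using tT \<open>\<delta> > 0\<close> by (simp add: U_nbhd_def)
    ultimately show ?thesis by (auto simp: K_def)
  qed
  have "\<bar>(g r - g t) - L * frpow \<alpha> (r - t)\<bar> \<le> 0"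
  proof (rule field_le_epsilon)
    fix e :: real
    assume "e > 0"
    have "K \<ge> 0" by (simp add: K_def)
    then have "e / (K + 1) * K \<le> e"
      using \<open>e > 0\<close> by (simp add: field_simps)
    then show "\<bar>(g r - g t) - L * frpow \<alpha> (r - t)\<bar> \<le> 0 + e"
      using bound[of "e / (K + 1)"] \<open>e > 0\<close> \<open>K \<ge> 0\<close> by simp
  qed
  moreover have "frpow \<alpha> (r - t) = - frpow \<alpha> (ts_nu T t)"
    using frpow_minus[OF Q, of "t - r"] by (simp add: ts_nu_def r_def)
  ultimately show ?thesis
    by (simp add: r_def algebra_simps)
qed

lemma abs_slope_product_error_le:
  fixes M c L P K x \<eta> e :: real
  assumes PK: "\<bar>P\<bar> = K" and err: "\<bar>x - L * P\<bar> \<le> e * K" and near: "\<bar>M - c\<bar> \<le> \<eta>"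
  shows "\<bar>M * x - c * L * P\<bar> \<le> (\<eta> * \<bar>L\<bar> + (\<bar>c\<bar> + \<eta>) * e) * K"
proof -
  have "0 \<le> e * K"
    using err by linarith
  have "M * x - c * L * P = (M - c) * L * P + M * (x - L * P)"
    by (simp add: algebra_simps)
  also have "\<bar>\<dots>\<bar> \<le> \<bar>M - c\<bar> * \<bar>L\<bar> * K + \<bar>M\<bar> * \<bar>x - L * P\<bar>"
    by (metis PK abs_mult abs_triangle_ineq)
  also have "\<dots> \<le> \<eta> * \<bar>L\<bar> * K + (\<bar>c\<bar> + \<eta>) * (e * K)"
    using near err \<open>0 \<le> e * K\<close> PK
    by (intro add_mono mult_right_mono mult_mono) auto
  finally show ?thesis
    by (simp add: algebra_simps)
qed

lemma nabla_frac_has_deriv_chain_slope: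
  assumes deriv: "nabla_frac_has_deriv T \<alpha> g t L"
    and slope: "\<And>b. f (g (ts_rho T t)) - f b = N b * (g (ts_rho T t) - b)"
    and cont: "continuous (at t within T) (\<lambda>s. N (g s))"
  shows "nabla_frac_has_deriv T \<alpha> (f \<circ> g) t (N (g t) * L)"
  unfolding nabla_frac_has_deriv_def
proof (intro conjI allI impI)
  show "t \<in> ts_Tk T"
    using deriv by (simp add: nabla_frac_has_deriv_def)
  define r where "r = ts_rho T t"
  define c where "c = N (g t)"
  define U where "U \<delta> = (if \<alpha> \<in> Qodd then U_nbhd T \<delta> t else U_left T \<delta> t)" for \<delta>
  fix \<epsilon> :: real
  assume "\<epsilon> > 0"
  define \<eta> where "\<eta> = min 1 (\<epsilon> / (2 * (\<bar>L\<bar> + 1)))"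
  define e where "e = \<epsilon> / (2 * (\<bar>c\<bar> + 1))"
  have "\<eta> > 0" "e > 0"
    using \<open>\<epsilon> > 0\<close> by (auto simp: \<eta>_def e_def)
  have "\<eta> * \<bar>L\<bar> \<le> \<epsilon> / 2"
    using \<open>\<epsilon> > 0\<close> by (auto simp: \<eta>_def min_def field_simps)
  moreover have "(\<bar>c\<bar> + \<eta>) * e \<le> \<epsilon> / 2"
    using \<open>e > 0\<close> by (auto simp: \<eta>_def e_def field_simps)
  ultimately have budget: "\<eta> * \<bar>L\<bar> + (\<bar>c\<bar> + \<eta>) * e \<le> \<epsilon>"
    by linarith
  obtain \<delta>1 where "\<delta>1 > 0" and near: "\<And>s. s \<in> T \<Longrightarrow> dist s t < \<delta>1 \<Longrightarrow> \<bar>N (g s) - c\<bar> < \<eta>"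
    using cont \<open>\<eta> > 0\<close> unfolding continuous_within_eps_delta c_def dist_real_def by blast
  obtain \<delta>2 where "\<delta>2 > 0" and err: "\<And>s. s \<in> U \<delta>2 \<Longrightarrow>
      \<bar>(g r - g s) - L * frpow \<alpha> (r - s)\<bar> \<le> e * \<bar>r - s\<bar> powr \<alpha>"
    using deriv \<open>e > 0\<close> unfolding nabla_frac_has_deriv_def r_def U_def by blast
  have "\<bar>f (g r) - f (g s) - c * L * frpow \<alpha> (r - s)\<bar> \<le> \<epsilon> * \<bar>r - s\<bar> powr \<alpha>"
    if s: "s \<in> U (min \<delta>1 \<delta>2)" for s
  proof -
    have "s \<in> T" "dist s t < \<delta>1" "s \<in> U \<delta>2"
      using s by (auto simp: U_def U_nbhd_def U_left_def dist_real_def split: if_splits)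
    have "\<alpha> \<in> Qodd \<or> 0 \<le> r - s"
      using s le_ts_rho by (auto simp: U_def U_left_def r_def split: if_splits)
    then have "\<bar>frpow \<alpha> (r - s)\<bar> = \<bar>r - s\<bar> powr \<alpha>"
      by (rule abs_frpow)
    from abs_slope_product_error_le[OF this err[OF \<open>s \<in> U \<delta>2\<close>], of "N (g s)" c \<eta>]
    have "\<bar>N (g s) * (g r - g s) - c * L * frpow \<alpha> (r - s)\<bar>
        \<le> (\<eta> * \<bar>L\<bar> + (\<bar>c\<bar> + \<eta>) * e) * \<bar>r - s\<bar> powr \<alpha>"
      using near[OF \<open>s \<in> T\<close> \<open>dist s t < \<delta>1\<close>] by simp
    also have "\<dots> \<le> \<epsilon> * \<bar>r - s\<bar> powr \<alpha>"
      using budget by (simp add: mult_right_mono)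
    finally show ?thesis
      using slope[of "g s"] by (simp add: r_def)
  qed
  moreover have "min \<delta>1 \<delta>2 > 0"
    using \<open>\<delta>1 > 0\<close> \<open>\<delta>2 > 0\<close> by simp
  ultimately show "\<exists>\<delta>>0. \<forall>s\<in>(if \<alpha> \<in> Qodd then U_nbhd T \<delta> t else U_left T \<delta> t).
      \<bar>(f \<circ> g) (ts_rho T t) - (f \<circ> g) s - N (g t) * L * frpow \<alpha> (ts_rho T t - s)\<bar>
        \<le> \<epsilon> * \<bar>ts_rho T t - s\<bar> powr \<alpha>"
    unfolding U_def r_def c_def comp_apply by blast
qed

theorem mainTheorem6:
  fixes T :: "real set" and \<alpha> t Lg :: real
    and f f' g :: "real \<Rightarrow> real"
  assumes "time_scale T"
    and "0 < \<alpha>" and "\<alpha> \<le> 1"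
    and "\<And>x. (f has_real_derivative f' x) (at x)"
    and "continuous_on UNIV f'"
    and "\<forall>x\<in>ts_Tk T. continuous (at x within T) g"
    and "t \<in> ts_Tk T"
    and "nabla_frac_has_deriv T \<alpha> g t Lg"
  shows "nabla_frac_differentiable T \<alpha> (f \<circ> g) t \<and>
         nabla_frac_has_deriv T \<alpha> (f \<circ> g) t
           (integral {0..1} (\<lambda>\<phi>. f' (g (ts_rho T t) + \<phi> * frpow \<alpha> (ts_nu T t) * Lg)) * Lg)"
proof -
  define a where "a = g (ts_rho T t)"
  define I where "I = integral {0..1} (\<lambda>\<phi>. f' (a + \<phi> * frpow \<alpha> (ts_nu T t) * Lg))"
  define N where "N = difference_quotient f f' a"
  have "nabla_frac_has_deriv T \<alpha> (f \<circ> g) t (I * Lg)"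
  proof (cases "\<alpha> \<notin> Qodd \<and> ts_rho T t < t")
    case True
    then show ?thesis
      using assms(7) nabla_frac_has_deriv_left_scattered by blast
  next
    case False
    then have "g t = a + frpow \<alpha> (ts_nu T t) * Lg"
      using nabla_frac_has_deriv_jump[OF assms(8)] ts_rho_le[of T t] unfolding a_def by force
    then have "I = N (g t)"
      using integral_deriv_segment[OF assms(4)] by (simp add: I_def N_def mult.assoc)
    moreover have "continuous (at t within T) (\<lambda>s. N (g s))"
      using assms(6,7) isCont_difference_quotient[OF assms(4)]
      by (auto simp: N_def intro: continuous_within_compose3)
    ultimately show ?thesis
      using nabla_frac_has_deriv_chain_slope[OF assms(8)] difference_quotient_eq
      unfolding N_def a_def by metis
  qed
  then show ?thesis
    unfolding nabla_frac_differentiable_def I_def a_def by blast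
qed

end
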